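(* For every $\varepsilon>0$ there exists $n_0$ such that every graph $G$ on $n\ge n_0$ vertices that contains no clique of size $\frac12\log_2 n$ satisfies $\chi_\ell(G)\le(2+\varepsilon)\,n/\log_2 n$. Equivalently, $R_{\chi_\ell}(k,\underline{k})\le 2^{(2+o(1))k}$ as $k\to\infty$.
   Context: $\chi_\ell(G)$ is the list chromatic number: the least $k$ such that for every assignment of lists $L(v)\subset\mathbb Z^+$ with $|L(v)|=k$ there is a proper colouring $c$ with $c(v)\in L(v)$ for all $v$. For positive integers $k,\ell$, the list chromatic Ramsey number $R_{\chi_\ell}(k,\underline{\ell})$ is the least $n$ such that every $K_k$-free graph $G$ on $n$ vertices satisfies $\chi_\ell(G)<n/\ell$. *)

theory Defs
  imports Complex_Main
begin

definition simple_graph :: "nat set \<Rightarrow> (nat \<Rightarrow> nat \<Rightarrow> bool) \<Rightarrow> bool" where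
  "simple_graph V E \<longleftrightarrow> finite V \<and>
     (\<forall>u v. E u v \<longrightarrow> u \<in> V \<and> v \<in> V \<and> u \<noteq> v \<and> E v u)"

definition is_clique :: "nat set \<Rightarrow> (nat \<Rightarrow> nat \<Rightarrow> bool) \<Rightarrow> nat set \<Rightarrow> bool" where
  "is_clique V E K \<longleftrightarrow> K \<subseteq> V \<and> (\<forall>u\<in>K. \<forall>v\<in>K. u \<noteq> v \<longrightarrow> E u v)"

definition choosable :: "nat set \<Rightarrow> (nat \<Rightarrow> nat \<Rightarrow> bool) \<Rightarrow> nat \<Rightarrow> bool" where
  "choosable V E k \<longleftrightarrow>
     (\<forall>L :: nat \<Rightarrow> nat set. (\<forall>v\<in>V. L v \<subseteq> {0<..} \<and> finite (L v) \<and> card (L v) = k) \<longrightarrow>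
        (\<exists>c :: nat \<Rightarrow> nat. (\<forall>v\<in>V. c v \<in> L v) \<and>
           (\<forall>u\<in>V. \<forall>v\<in>V. E u v \<longrightarrow> c u \<noteq> c v)))"

definition list_chromatic_number :: "nat set \<Rightarrow> (nat \<Rightarrow> nat \<Rightarrow> bool) \<Rightarrow> nat" where
  "list_chromatic_number V E = (LEAST k. choosable V E k)"

end

theory Submission
  imports Defs "HOL-Real_Asymp.Real_Asymp"
begin

text \<open>Let L = log2 n, k = ceil(L/2) and t = floor(L/a) with a slightly larger than 2.
  As there is no k-clique, the Erdos--Szekeres bound gives an independent t-set inside every
  set of m = 2^(k+t) vertices. Given lists of size n/t + m, colour greedily: while some colour c
  lies in at least m lists, give c to an independent t-set of those vertices and delete c from
  the other lists; each round uses up t vertices but only one colour of every list. When every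
  colour lies in fewer than m lists and every list still has m colours, Hall's theorem yields
  distinct representatives, which form a proper colouring. Hence the list chromatic number is at
  most n/t + 2^(k+t), roughly a n / L + n^(1/2 + 1/a), and the second term is o(n / L).\<close>

definition hall_condition :: "'a set \<Rightarrow> ('a \<Rightarrow> 'b set) \<Rightarrow> bool" where
  "hall_condition U A \<longleftrightarrow> (\<forall>X\<subseteq>U. card X \<le> card (\<Union>(A ` X)))"

lemma hall_condition_remove_critical:
  assumes U: "finite U" "\<forall>v\<in>U. finite (A v)" and hall: "hall_condition U A"
    and X: "X \<subseteq> U" "card (\<Union>(A ` X)) = card X"
  shows "hall_condition (U - X) (\<lambda>v. A v - \<Union>(A ` X))"
  unfolding hall_condition_def
proof (intro allI impI)
  fix Y assume Y: "Y \<subseteq> U - X"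
  have XY: "X \<union> Y \<subseteq> U" using X Y by auto
  have "finite (\<Union>(A ` (X \<union> Y)))" using XY U by (meson finite_UN_I finite_subset subsetD)
  moreover have "(\<Union>v\<in>Y. A v - \<Union>(A ` X)) = \<Union>(A ` (X \<union> Y)) - \<Union>(A ` X)" by auto
  ultimately have "card (\<Union>v\<in>Y. A v - \<Union>(A ` X)) = card (\<Union>(A ` (X \<union> Y))) - card X"
    using X by (simp add: card_Diff_subset finite_subset)
  moreover have "card (X \<union> Y) \<le> card (\<Union>(A ` (X \<union> Y)))"
    using hall XY unfolding hall_condition_def by blast
  moreover have "card (X \<union> Y) = card X + card Y"
    using X Y U by (intro card_Un_disjoint) (auto intro: finite_subset)
  ultimately show "card Y \<le> card (\<Union>v\<in>Y. A v - \<Union>(A ` X))" by linarith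
qed

lemma hall_condition_remove_element:
  assumes U: "finite U" "\<forall>v\<in>U. finite (A v)" and hall: "hall_condition U A"
    and no_critical: "\<forall>X\<subseteq>U. X \<noteq> {} \<longrightarrow> X \<noteq> U \<longrightarrow> card (\<Union>(A ` X)) \<noteq> card X"
    and v: "v \<in> U"
  shows "hall_condition (U - {v}) (\<lambda>w. A w - {a})"
  unfolding hall_condition_def
proof (intro allI impI)
  fix Y assume Y: "Y \<subseteq> U - {v}"
  show "card Y \<le> card (\<Union>w\<in>Y. A w - {a})"
  proof (cases "Y = {}")
    case False
    moreover have "Y \<subseteq> U" "Y \<noteq> U" using Y v by auto
    ultimately have "card Y < card (\<Union>(A ` Y))"
      using hall no_critical unfolding hall_condition_def by (metis le_neq_implies_less)
    moreover have "finite (\<Union>(A ` Y))" using Y U by (meson Diff_subset finite_UN_I finite_subset subsetD)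
    moreover have "(\<Union>w\<in>Y. A w - {a}) = \<Union>(A ` Y) - {a}" by auto
    ultimately show ?thesis by (auto simp: card_Diff_singleton_if)
  qed simp
qed

theorem Hall_marriage:
  assumes "finite U" "\<forall>v\<in>U. finite (A v)" "hall_condition U A"
  shows "\<exists>f. inj_on f U \<and> (\<forall>v\<in>U. f v \<in> A v)"
  using assms
proof (induction "card U" arbitrary: U A rule: less_induct)
  case less
  note U = less.prems(1,2) and hall = less.prems(3)
  consider (empty) "U = {}"
    | (critical) X where "X \<subseteq> U" "X \<noteq> {}" "X \<noteq> U" "card (\<Union>(A ` X)) = card X"
    | (no_critical) v where "v \<in> U" "\<forall>X\<subseteq>U. X \<noteq> {} \<longrightarrow> X \<noteq> U \<longrightarrow> card (\<Union>(A ` X)) \<noteq> card X"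
    by (metis equals0I)
  then show ?case
  proof cases
    case empty
    then show ?thesis by simp
  next
    case critical
    have "finite X" using critical(1) U(1) by (rule finite_subset)
    have "card X < card U" "card (U - X) < card U"
      using critical U(1) by (auto intro!: psubset_card_mono)
    have "\<exists>f1. inj_on f1 X \<and> (\<forall>v\<in>X. f1 v \<in> A v)"
      using critical(1) hall U(2) \<open>finite X\<close> \<open>card X < card U\<close>
      by (intro less.hyps) (auto simp: hall_condition_def)
    moreover have "\<exists>f2. inj_on f2 (U - X) \<and> (\<forall>v\<in>U - X. f2 v \<in> A v - \<Union>(A ` X))"
      using hall_condition_remove_critical[OF U hall critical(1,4)] U \<open>card (U - X) < card U\<close>
      by (intro less.hyps) auto
    ultimately obtain f1 f2 where
      f1: "inj_on f1 X" "\<forall>v\<in>X. f1 v \<in> A v" and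
      f2: "inj_on f2 (U - X)" "\<forall>v\<in>U - X. f2 v \<in> A v - \<Union>(A ` X)"
      by blast
    define f where "f v = (if v \<in> X then f1 v else f2 v)" for v
    have "inj_on f X" "inj_on f (U - X)"
      using f1(1) f2(1) inj_on_cong[of X f f1] inj_on_cong[of "U - X" f f2] by (simp_all add: f_def)
    moreover have "f ` X \<subseteq> \<Union>(A ` X)" "f ` (U - X) \<inter> \<Union>(A ` X) = {}"
      using f1(2) f2(2) by (auto simp: f_def)
    ultimately have "inj_on f (X \<union> (U - X))"
      unfolding inj_on_Un by blast
    moreover have "X \<union> (U - X) = U" using critical(1) by blast
    moreover have "\<forall>v\<in>U. f v \<in> A v" using f1(2) f2(2) by (simp add: f_def)
    ultimately show ?thesis by auto
  next
    case no_critical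
    have "card {v} \<le> card (\<Union>(A ` {v}))"
      using hall no_critical(1) unfolding hall_condition_def by blast
    then obtain a where a: "a \<in> A v" by fastforce
    have "card (U - {v}) < card U" using U(1) no_critical(1) by (rule card_Diff1_less)
    then have "\<exists>f. inj_on f (U - {v}) \<and> (\<forall>w\<in>U - {v}. f w \<in> A w - {a})"
      using hall_condition_remove_element[OF U hall no_critical(2,1)] U by (intro less.hyps) auto
    then obtain f where f: "inj_on f (U - {v})" "\<forall>w\<in>U - {v}. f w \<in> A w - {a}"
      by blast
    have "inj_on (f(v := a)) U"
      using f no_critical(1) by (auto simp: inj_on_def)
    then show ?thesis
      using f a by (intro exI[of _ "f(v := a)"]) auto
  qed
qed

lemma hall_condition_bounded_multiplicity:
  assumes U: "finite U" and m: "m \<ge> 1" and lists: "\<forall>v\<in>U. finite (A v) \<and> m \<le> card (A v)"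
    and multiplicity: "\<forall>c. card {v\<in>U. c \<in> A v} \<le> m"
  shows "hall_condition U A"
  unfolding hall_condition_def
proof (intro allI impI)
  fix X assume X: "X \<subseteq> U"
  define C where "C = \<Union>(A ` X)"
  have "finite X" using X U by (rule finite_subset)
  moreover have "finite C" unfolding C_def using \<open>finite X\<close> X lists by blast
  ultimately have "(\<Sum>v\<in>X. card {c\<in>C. c \<in> A v}) = (\<Sum>c\<in>C. card {v\<in>X. c \<in> A v})"
    using sum.swap_restrict[of X C "\<lambda>_ _. 1::nat" "\<lambda>v c. c \<in> A v"] by simp
  moreover have "{c\<in>C. c \<in> A v} = A v" if "v \<in> X" for v
    using that by (auto simp: C_def)
  ultimately have double_count: "(\<Sum>v\<in>X. card (A v)) = (\<Sum>c\<in>C. card {v\<in>X. c \<in> A v})"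
    by simp
  have "card X * m \<le> (\<Sum>v\<in>X. card (A v))"
    using X lists sum_bounded_below[of X m "\<lambda>v. card (A v)"] by auto
  also have "\<dots> \<le> (\<Sum>c\<in>C. m)"
    unfolding double_count
  proof (rule sum_mono)
    fix c
    have "card {v\<in>X. c \<in> A v} \<le> card {v\<in>U. c \<in> A v}"
      using X U by (intro card_mono) auto
    then show "card {v\<in>X. c \<in> A v} \<le> m" using multiplicity order_trans by blast
  qed
  also have "\<dots> = card C * m" by simp
  finally show "card X \<le> card (\<Union>(A ` X))" using m by (simp add: C_def)
qed

definition is_independent :: "(nat \<Rightarrow> nat \<Rightarrow> bool) \<Rightarrow> nat set \<Rightarrow> bool" where
  "is_independent E I \<longleftrightarrow> (\<forall>u\<in>I. \<forall>v\<in>I. \<not> E u v)"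

lemma is_clique_insert:
  assumes "simple_graph V E" "is_clique V E K" "v \<in> V" "\<forall>u\<in>K. E v u"
  shows "is_clique V E (insert v K)"
  using assms unfolding is_clique_def simple_graph_def by blast

lemma is_independent_insert:
  assumes "simple_graph V E" "is_independent E I" "\<forall>u\<in>I. \<not> E v u"
  shows "is_independent E (insert v I)"
  using assms unfolding is_independent_def simple_graph_def by blast

lemma clique_or_independent:
  assumes G: "simple_graph V E" and "S \<subseteq> V" "2 ^ (k + t) \<le> card S"
  shows "(\<exists>K\<subseteq>S. card K = k \<and> is_clique V E K) \<or> (\<exists>I\<subseteq>S. card I = t \<and> is_independent E I)"
  using assms(2,3)
proof (induction "k + t" arbitrary: k t S rule: less_induct)
  case less
  show ?case
  proof (cases "k = 0 \<or> t = 0")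
    case True
    then show ?thesis by (auto simp: is_clique_def is_independent_def intro!: exI[of _ "{}"])
  next
    case False
    then obtain k' t' where kt: "k = Suc k'" "t = Suc t'" by (meson not0_implies_Suc)
    have S: "finite S" using less.prems G finite_subset unfolding simple_graph_def by blast
    obtain v where v: "v \<in> S" using less.prems(2) by fastforce
    define N where "N = {u\<in>S - {v}. E v u}"
    define M where "M = {u\<in>S - {v}. \<not> E v u}"
    have "finite N" "finite M" "N \<inter> M = {}" "N \<union> M = S - {v}"
      using S by (auto simp: N_def M_def)
    then have "card N + card M = card (S - {v})" by (metis card_Un_disjoint)
    also have "\<dots> = card S - 1" using v by (rule card_Diff_singleton)
    moreover have "card S > 0" using S v card_gt_0_iff by blast
    ultimately have "card N + card M + 1 = card S" by linarith
    \<comment> \<open>since 2^(k+t) = 2^(k'+t) + 2^(k+t')\<close>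
    then have "2 ^ (k' + t) \<le> card N \<or> 2 ^ (k + t') \<le> card M"
      using less.prems(2) kt by auto
    then show ?thesis
    proof
      assume "2 ^ (k' + t) \<le> card N"
      then have "(\<exists>K\<subseteq>N. card K = k' \<and> is_clique V E K) \<or> (\<exists>I\<subseteq>N. card I = t \<and> is_independent E I)"
        using less.prems(1) kt by (intro less.hyps) (auto simp: N_def)
      then show ?thesis
      proof (elim disjE exE conjE)
        fix K assume K: "K \<subseteq> N" "card K = k'" "is_clique V E K"
        then have "insert v K \<subseteq> S" "card (insert v K) = k" "is_clique V E (insert v K)"
          using v S kt less.prems(1) is_clique_insert[OF G K(3)]
          by (auto simp: N_def finite_subset card_insert_if)
        then show ?thesis by blast
      qed (auto simp: N_def)
    next
      assume "2 ^ (k + t') \<le> card M"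
      then have "(\<exists>K\<subseteq>M. card K = k \<and> is_clique V E K) \<or> (\<exists>I\<subseteq>M. card I = t' \<and> is_independent E I)"
        using less.prems(1) kt by (intro less.hyps) (auto simp: M_def)
      then show ?thesis
      proof (elim disjE exE conjE)
        fix I assume I: "I \<subseteq> M" "card I = t'" "is_independent E I"
        then have "insert v I \<subseteq> S" "card (insert v I) = t" "is_independent E (insert v I)"
          using v S kt is_independent_insert[OF G I(3)]
          by (auto simp: M_def finite_subset card_insert_if)
        then show ?thesis by blast
      qed (auto simp: M_def)
    qed
  qed
qed

definition proper_list_colouring ::
    "(nat \<Rightarrow> nat \<Rightarrow> bool) \<Rightarrow> nat set \<Rightarrow> (nat \<Rightarrow> nat set) \<Rightarrow> (nat \<Rightarrow> nat) \<Rightarrow> bool" where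
  "proper_list_colouring E U L c \<longleftrightarrow> (\<forall>v\<in>U. c v \<in> L v) \<and> (\<forall>u\<in>U. \<forall>v\<in>U. E u v \<longrightarrow> c u \<noteq> c v)"

lemma proper_list_colouring_inj_on:
  assumes "simple_graph V E" "inj_on f U" "\<forall>v\<in>U. f v \<in> L v"
  shows "proper_list_colouring E U L f"
  unfolding proper_list_colouring_def
proof (intro conjI ballI impI)
  fix u v assume "u \<in> U" "v \<in> U" "E u v"
  moreover from \<open>E u v\<close> have "u \<noteq> v" using assms(1) by (simp add: simple_graph_def)
  ultimately show "f u \<noteq> f v" using assms(2) by (simp add: inj_on_eq_iff)
qed (use assms(3) in blast)

lemma proper_list_colouring_extend:
  assumes "proper_list_colouring E (U - I) (\<lambda>v. L v - {c}) c'" "is_independent E I" "\<forall>v\<in>I. c \<in> L v"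
  shows "proper_list_colouring E U L (\<lambda>v. if v \<in> I then c else c' v)"
proof -
  have "c' v \<in> L v - {c}" if "v \<in> U - I" for v
    using assms(1) that by (simp add: proper_list_colouring_def)
  moreover have "c' u \<noteq> c' v" if "u \<in> U - I" "v \<in> U - I" "E u v" for u v
    using assms(1) that unfolding proper_list_colouring_def by blast
  moreover have "\<not> E u v" if "u \<in> I" "v \<in> I" for u v
    using assms(2) that by (simp add: is_independent_def)
  ultimately show ?thesis
    using assms(3) unfolding proper_list_colouring_def by auto
qed

lemma proper_list_colouring_greedy:
  assumes G: "simple_graph V E" and t: "t \<ge> 1" and m: "m \<ge> 1"
    and indep: "\<forall>S\<subseteq>V. m \<le> card S \<longrightarrow> (\<exists>I\<subseteq>S. card I = t \<and> is_independent E I)"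
  shows "U \<subseteq> V \<Longrightarrow> \<forall>v\<in>U. finite (L v) \<and> m + card U div t \<le> card (L v) \<Longrightarrow>
    \<exists>c. proper_list_colouring E U L c"
proof (induction "card U" arbitrary: U L rule: less_induct)
  case less
  have U: "finite U" using less.prems G finite_subset unfolding simple_graph_def by blast
  show ?case
  proof (cases "\<exists>c. m \<le> card {v\<in>U. c \<in> L v}")
    case True
    then obtain c where "m \<le> card {v\<in>U. c \<in> L v}" by blast
    moreover have "{v\<in>U. c \<in> L v} \<subseteq> V" using less.prems(1) by auto
    ultimately obtain I where I: "I \<subseteq> {v\<in>U. c \<in> L v}" "card I = t" "is_independent E I"
      using indep by blast
    have "I \<subseteq> U" using I(1) by auto
    then have "t \<le> card U" using U I(2) card_mono by blast
    then have "card (U - I) + t = card U"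
      using U I(2) \<open>I \<subseteq> U\<close> by (simp add: card_Diff_subset finite_subset)
    then have smaller: "card (U - I) < card U" and div_step: "card (U - I) div t + 1 = card U div t"
      using t by (auto simp flip: \<open>card (U - I) + t = card U\<close>)
    have lists: "\<forall>v\<in>U - I. finite (L v - {c}) \<and> m + card (U - I) div t \<le> card (L v - {c})"
    proof
      fix v assume "v \<in> U - I"
      then have "finite (L v)" "m + card U div t \<le> card (L v)" using less.prems(2) by auto
      moreover have "card (L v) - card {c} \<le> card (L v - {c})" by (rule diff_card_le_card_Diff) simp
      ultimately show "finite (L v - {c}) \<and> m + card (U - I) div t \<le> card (L v - {c})"
        using div_step by simp
    qed
    have "U - I \<subseteq> V" using less.prems(1) by blast
    then obtain c' where "proper_list_colouring E (U - I) (\<lambda>v. L v - {c}) c'"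
      using less.hyps[OF smaller _ lists] by blast
    then show ?thesis
      using proper_list_colouring_extend I(1,3) by blast
  next
    case False
    then have "\<forall>c. card {v\<in>U. c \<in> L v} \<le> m" by (meson nat_le_linear)
    moreover have "\<forall>v\<in>U. finite (L v) \<and> m \<le> card (L v)" using less.prems(2) by fastforce
    ultimately have "hall_condition U L"
      using hall_condition_bounded_multiplicity[OF U m] by blast
    moreover have "\<forall>v\<in>U. finite (L v)" using less.prems(2) by blast
    ultimately obtain f where "inj_on f U" "\<forall>v\<in>U. f v \<in> L v"
      using Hall_marriage[OF U] by blast
    then show ?thesis using proper_list_colouring_inj_on[OF G] by blast
  qed
qed

lemma choosable_if_independent_sets:
  assumes "simple_graph V E" "t \<ge> 1" "m \<ge> 1"
    and "\<forall>S\<subseteq>V. m \<le> card S \<longrightarrow> (\<exists>I\<subseteq>S. card I = t \<and> is_independent E I)"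
  shows "choosable V E (card V div t + m)"
  unfolding choosable_def
proof (intro allI impI)
  fix L :: "nat \<Rightarrow> nat set"
  assume "\<forall>v\<in>V. L v \<subseteq> {0<..} \<and> finite (L v) \<and> card (L v) = card V div t + m"
  then have "\<forall>v\<in>V. finite (L v) \<and> m + card V div t \<le> card (L v)" by auto
  then show "\<exists>c. (\<forall>v\<in>V. c v \<in> L v) \<and> (\<forall>u\<in>V. \<forall>v\<in>V. E u v \<longrightarrow> c u \<noteq> c v)"
    using proper_list_colouring_greedy[OF assms] unfolding proper_list_colouring_def by blast
qed

lemma list_chromatic_number_le_if_clique_free:
  assumes G: "simple_graph V E" and t: "t \<ge> 1"
    and clique_free: "\<forall>K. is_clique V E K \<longrightarrow> card K < k"
  shows "list_chromatic_number V E \<le> card V div t + 2 ^ (k + t)"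
proof -
  have "\<forall>S\<subseteq>V. 2 ^ (k + t) \<le> card S \<longrightarrow> (\<exists>I\<subseteq>S. card I = t \<and> is_independent E I)"
    using clique_or_independent[OF G] clique_free by blast
  then have "choosable V E (card V div t + 2 ^ (k + t))"
    using choosable_if_independent_sets[OF G t] by simp
  then show ?thesis
    unfolding list_chromatic_number_def by (rule Least_le)
qed

lemma list_chromatic_number_le_log:
  fixes a :: real and V :: "nat set"
  defines "L \<equiv> log 2 (real (card V))"
  assumes G: "simple_graph V E" and a: "0 < a" "a < L"
    and clique_free: "\<forall>K. is_clique V E K \<longrightarrow> real (card K) < L / 2"
  shows "real (list_chromatic_number V E)
    \<le> real (card V) / (L / a - 1) + 2 * real (card V) * 2 powr ((1 / a - 1 / 2) * L)"
proof -
  define n where "n = real (card V)"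
  define k where "k = nat \<lceil>L / 2\<rceil>"
  define t where "t = nat \<lfloor>L / a\<rfloor>"
  have "1 < L / a" using a by simp
  then have t_bounds: "L / a - 1 < t" "t \<le> L / a" and "t \<ge> 1"
    unfolding t_def by linarith+
  have k_bounds: "L / 2 \<le> k" "k \<le> L / 2 + 1"
    using a unfolding k_def by linarith+
  have "n > 0" using a unfolding L_def n_def by (cases "card V = 0") (auto simp: log_def)
  have "\<forall>K. is_clique V E K \<longrightarrow> card K < k"
    using clique_free k_bounds(1) by fastforce
  then have "list_chromatic_number V E \<le> card V div t + 2 ^ (k + t)"
    by (rule list_chromatic_number_le_if_clique_free[OF G \<open>t \<ge> 1\<close>])
  then have "real (list_chromatic_number V E) \<le> real (card V div t) + 2 ^ (k + t)"
    using of_nat_mono by fastforce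
  moreover have "real (card V div t) \<le> n / (L / a - 1)"
  proof -
    have "real (card V div t) \<le> n / t" unfolding n_def by (rule of_nat_div_le_of_nat)
    also have "\<dots> \<le> n / (L / a - 1)"
      using t_bounds \<open>1 < L / a\<close> \<open>n > 0\<close> by (intro divide_left_mono) auto
    finally show ?thesis .
  qed
  moreover have "(2::real) ^ (k + t) \<le> 2 powr (1 + L + (1 / a - 1 / 2) * L)"
    using k_bounds t_bounds by (subst powr_realpow[symmetric]) (auto simp: algebra_simps)
  moreover have "2 powr (1 + L + (1 / a - 1 / 2) * L) = 2 * n * 2 powr ((1 / a - 1 / 2) * L)"
    using \<open>n > 0\<close> by (simp add: powr_add L_def n_def)
  ultimately have "real (list_chromatic_number V E) \<le> n / (L / a - 1) + 2 * n * 2 powr ((1 / a - 1 / 2) * L)"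
    by linarith
  then show ?thesis by (simp add: n_def)
qed

lemma log_bound_tendsto:
  fixes a :: real
  assumes "2 < a"
  shows "((\<lambda>L. L / (L / a - 1) + 2 * L * 2 powr ((1 / a - 1 / 2) * L)) \<longlongrightarrow> a) at_top"
proof -
  define c where "c = 1 / 2 - 1 / a"
  have "c > 0" using assms by (simp add: c_def field_simps)
  then have "((\<lambda>L. L * 2 powr (- c * L)) \<longlongrightarrow> 0) at_top" by real_asymp
  moreover have "((\<lambda>L. L / (L / a - 1)) \<longlongrightarrow> a) at_top" using assms by real_asymp
  ultimately have "((\<lambda>L. L / (L / a - 1) + 2 * (L * 2 powr (- c * L))) \<longlongrightarrow> a + 2 * 0) at_top"
    by (intro tendsto_intros)
  then show ?thesis by (simp add: c_def mult.assoc)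
qed

theorem mainTheorem18:
  fixes \<epsilon> :: real
  assumes "\<epsilon> > 0"
  shows "\<exists>n0::nat. \<forall>V E. simple_graph V E \<longrightarrow> card V \<ge> n0 \<longrightarrow>
     (\<forall>K. is_clique V E K \<longrightarrow> real (card K) < log 2 (real (card V)) / 2) \<longrightarrow>
     real (list_chromatic_number V E) \<le> (2 + \<epsilon>) * real (card V) / log 2 (real (card V))"
proof -
  define a where "a = 2 + \<epsilon> / 2"
  have a: "2 < a" "a < 2 + \<epsilon>" using assms by (simp_all add: a_def)
  define f where "f L = L / (L / a - 1) + 2 * L * 2 powr ((1 / a - 1 / 2) * L)" for L
  have "\<forall>\<^sub>F L in at_top. f L < 2 + \<epsilon>"
    using order_tendstoD(2)[OF log_bound_tendsto[OF a(1)] a(2)] by (simp add: f_def)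
  then obtain L0 where L0: "\<And>L. L0 \<le> L \<Longrightarrow> f L < 2 + \<epsilon>"
    by (auto simp: eventually_at_top_linorder)
  show ?thesis
  proof (intro exI[of _ "nat \<lceil>2 powr max L0 (a + 1)\<rceil>"] allI impI)
    fix V E
    assume G: "simple_graph V E" and large: "nat \<lceil>2 powr max L0 (a + 1)\<rceil> \<le> card V"
      and clique_free: "\<forall>K. is_clique V E K \<longrightarrow> real (card K) < log 2 (real (card V)) / 2"
    define n where "n = real (card V)"
    define L where "L = log 2 n"
    have "2 powr max L0 (a + 1) \<le> n" using large unfolding n_def by linarith
    moreover from this have "0 < n" by (smt (verit) powr_gt_zero)
    ultimately have "max L0 (a + 1) \<le> L" unfolding L_def by (simp add: le_log_iff del: max.bounded_iff)
    then have L: "L0 \<le> L" "a < L" "0 < L" using a by auto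
    have "real (list_chromatic_number V E) \<le> n / (L / a - 1) + 2 * n * 2 powr ((1 / a - 1 / 2) * L)"
      using list_chromatic_number_le_log[OF G _ _ clique_free] a L unfolding L_def n_def by simp
    also have "\<dots> = n / L * f L" using L by (simp add: f_def distrib_left)
    also have "\<dots> \<le> n / L * (2 + \<epsilon>)"
      using L0[OF L(1)] L unfolding n_def by (intro mult_left_mono) auto
    finally show "real (list_chromatic_number V E) \<le> (2 + \<epsilon>) * real (card V) / log 2 (real (card V))"
      by (simp add: n_def L_def field_simps)
  qed
qed

end
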